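(* For $a\in\mathbb{R}$ let $(g_1,g_3)$ be the maximal solution of \[ \dot g_1=\frac{a^2+g_3^2}{g_1g_3},\qquad \dot g_3=\frac{a^2-g_3^2}{g_1^2},\qquad g_1(0)=g_3(0)=1 \] (the reduced left-invariant generalized Ricci flow on the Heisenberg group $H_3$ starting from the standard metric and $H_0=a\,e^{123}$). Its maximal interval of existence is of the form $(T_{\min}(a),\infty)$ with $T_{\min}(a)<0$, where $T_{\min}$ is an even function of $a$ with $T_{\min}(0)=-\tfrac13$, and \[ \lim_{t\to T_{\min}(a)^+}g_1(t)=0,\qquad \lim_{t\to T_{\min}(a)^+}g_3(t)=\begin{cases}\infty,&|a|<1,\\ 1,&a=\pm1,\\ 0,&|a|>1.\end{cases} \]
   Context: The system arises from the gauge-fixed generalized Ricci flow $\dot g=-2\mathrm{Rc}_g+\tfrac12H\circ_gH$, $\dot H=-\Delta_gH$ on left-invariant data on the Heisenberg group, with metric $g(t)=g_1(t)(e^1\otimes e^1+e^2\otimes e^2)+g_3(t)e^3\otimes e^3$, $[e_1,e_2]=e_3$, and $H(t)\equiv a\,e^{123}$. *)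

theory Defs
  imports "HOL-Analysis.Analysis"
begin

definition hsol :: "real \<Rightarrow> (real \<Rightarrow> real) \<Rightarrow> (real \<Rightarrow> real) \<Rightarrow> real set \<Rightarrow> bool" where
  "hsol a g1 g3 I \<longleftrightarrow>
     open I \<and> is_interval I \<and> 0 \<in> I \<and> g1 0 = 1 \<and> g3 0 = 1 \<and>
     (\<forall>t\<in>I. g1 t \<noteq> 0 \<and> g3 t \<noteq> 0 \<and>
        (g1 has_real_derivative (a\<^sup>2 + (g3 t)\<^sup>2) / (g1 t * g3 t)) (at t) \<and>
        (g3 has_real_derivative (a\<^sup>2 - (g3 t)\<^sup>2) / (g1 t)\<^sup>2) (at t))"

definition hmaxsol :: "real \<Rightarrow> (real \<Rightarrow> real) \<Rightarrow> (real \<Rightarrow> real) \<Rightarrow> real set \<Rightarrow> bool" where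
  "hmaxsol a g1 g3 I \<longleftrightarrow> hsol a g1 g3 I \<and>
     (\<forall>h1 h3 J. hsol a h1 h3 J \<and> I \<subseteq> J \<and> (\<forall>t\<in>I. h1 t = g1 t \<and> h3 t = g3 t) \<longrightarrow> J = I)"

end

theory Submission
  imports Defs "HOL-Real_Asymp.Real_Asymp"
begin

text \<open>
  Along a solution the quantity \<open>g1 (a\<^sup>2 - g3\<^sup>2) / g3\<close> is conserved, so it equals \<open>a\<^sup>2 - 1\<close>.
  For \<open>a\<^sup>2 = 1\<close> this forces \<open>g3 = 1\<close> and then \<open>g1 = sqrt (1 + 4 t)\<close>.
  Otherwise \<open>g1\<close> is a rational function of \<open>g3\<close>, and \<open>g3\<close> solves the autonomous equation
  \<open>g3' = (a\<^sup>2 - g3\<^sup>2)\<^sup>3 / ((a\<^sup>2 - 1)\<^sup>2 g3\<^sup>2)\<close>. Hence \<open>t = \<Phi> (g3 t)\<close> for an explicit primitive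
  \<open>\<Phi>\<close> of the reciprocal right-hand side, which is strictly monotone on the interval of values
  that \<open>g3\<close> can take and maps it onto \<open>(T, \<infinity>)\<close>. The inverse of \<open>\<Phi>\<close> is the maximal solution,
  and every solution is a restriction of it. As \<open>t \<rightarrow> T\<close>, \<open>g3\<close> runs to the end of its interval
  at which \<open>\<Phi>\<close> stays bounded: to \<open>\<infinity>\<close> if \<open>|a| < 1\<close> and to \<open>0\<close> if \<open>|a| > 1\<close>; in both cases
  \<open>g1 \<rightarrow> 0\<close>.
\<close>

section \<open>Positivity and the conserved quantity\<close>

lemma continuous_nonvanishing_pos:
  fixes g :: "real \<Rightarrow> real"
  assumes "is_interval I" "continuous_on I g" "\<And>t. t \<in> I \<Longrightarrow> g t \<noteq> 0"
    and "s \<in> I" "g s > 0" "t \<in> I"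
  shows "g t > 0"
proof (rule ccontr)
  assume "\<not> g t > 0"
  then have "g t < 0" using assms(3,6) by force
  have "is_interval (g ` I)"
    using assms(1,2) connected_continuous_image is_interval_connected_1 by blast
  then have "0 \<in> g ` I"
    using \<open>g t < 0\<close> assms(4-6) unfolding is_interval_1 by (meson image_eqI less_imp_le)
  then show False using assms(3) by auto
qed

lemma hsol_continuous_on:
  assumes "hsol a g1 g3 I"
  shows "continuous_on I g1" "continuous_on I g3"
  using assms unfolding hsol_def
  by (meson DERIV_isCont continuous_at_imp_continuous_on)+

lemma hsol_pos:
  assumes "hsol a g1 g3 I" "t \<in> I"
  shows "g1 t > 0" "g3 t > 0"
  using assms continuous_nonvanishing_pos[OF _ hsol_continuous_on(1)[OF assms(1)]]
    continuous_nonvanishing_pos[OF _ hsol_continuous_on(2)[OF assms(1)]]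
  unfolding hsol_def by auto

lemma hsol_deriv_zero_const:
  fixes f :: "real \<Rightarrow> real"
  assumes "hsol a g1 g3 I" "\<And>s. s \<in> I \<Longrightarrow> (f has_real_derivative 0) (at s)" "t \<in> I"
  shows "f t = f 0"
proof -
  have "convex I" "0 \<in> I" using assms(1) is_interval_convex unfolding hsol_def by auto
  with assms(2,3) show ?thesis
    using has_field_derivative_zero_constant[of I f] by (metis has_field_derivative_at_within)
qed

lemma hsol_conserved:
  assumes "hsol a g1 g3 I" "t \<in> I"
  shows "g1 t * (a\<^sup>2 - (g3 t)\<^sup>2) / g3 t = a\<^sup>2 - 1"
proof -
  have deriv: "((\<lambda>t. g1 t * (a\<^sup>2 - (g3 t)\<^sup>2) / g3 t) has_real_derivative 0) (at s)" if "s \<in> I" for s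
  proof -
    have "g1 s \<noteq> 0" "g3 s \<noteq> 0"
      and "(g1 has_real_derivative (a\<^sup>2 + (g3 s)\<^sup>2) / (g1 s * g3 s)) (at s)"
      and "(g3 has_real_derivative (a\<^sup>2 - (g3 s)\<^sup>2) / (g1 s)\<^sup>2) (at s)"
      using assms(1) that unfolding hsol_def by auto
    then show ?thesis
      by (auto intro!: derivative_eq_intros simp: field_simps power2_eq_square)
  qed
  from hsol_deriv_zero_const[OF assms(1) deriv assms(2)] assms(1) show ?thesis
    unfolding hsol_def by simp
qed

definition hsol_greatest :: "real \<Rightarrow> (real \<Rightarrow> real) \<Rightarrow> (real \<Rightarrow> real) \<Rightarrow> real \<Rightarrow> bool" where
  "hsol_greatest a G1 G3 T \<longleftrightarrow> hsol a G1 G3 {T<..} \<and>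
     (\<forall>g1 g3 I. hsol a g1 g3 I \<longrightarrow> I \<subseteq> {T<..} \<and> (\<forall>t\<in>I. g1 t = G1 t \<and> g3 t = G3 t))"

definition blowup_limits :: "real \<Rightarrow> real \<Rightarrow> (real \<Rightarrow> real) \<Rightarrow> (real \<Rightarrow> real) \<Rightarrow> bool" where
  "blowup_limits a T g1 g3 \<longleftrightarrow>
     (g1 \<longlongrightarrow> 0) (at_right T) \<and>
     (\<bar>a\<bar> < 1 \<longrightarrow> filterlim g3 at_top (at_right T)) \<and>
     (\<bar>a\<bar> = 1 \<longrightarrow> (g3 \<longlongrightarrow> 1) (at_right T)) \<and>
     (\<bar>a\<bar> > 1 \<longrightarrow> (g3 \<longlongrightarrow> 0) (at_right T))"

lemma blowup_limits_cong:
  assumes "blowup_limits a T G1 G3" "\<And>t. t > T \<Longrightarrow> g1 t = G1 t \<and> g3 t = G3 t"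
  shows "blowup_limits a T g1 g3"
proof -
  have "eventually (\<lambda>t. G1 t = g1 t \<and> G3 t = g3 t) (at_right T)"
    using eventually_at_right_less[of T] by eventually_elim (use assms(2) in auto)
  then have "eventually (\<lambda>t. G1 t = g1 t) (at_right T)" "eventually (\<lambda>t. G3 t = g3 t) (at_right T)"
    by (auto elim: eventually_mono)
  with assms(1) show ?thesis
    unfolding blowup_limits_def by (simp add: filterlim_cong tendsto_cong)
qed

lemma hsol_greatest_hmaxsol:
  assumes "hsol_greatest a G1 G3 T"
  shows "hmaxsol a G1 G3 {T<..}"
  unfolding hmaxsol_def
proof (intro conjI allI impI)
  show "hsol a G1 G3 {T<..}" using assms unfolding hsol_greatest_def by simp
  fix h1 h3 J assume "hsol a h1 h3 J \<and> {T<..} \<subseteq> J \<and> (\<forall>t\<in>{T<..}. h1 t = G1 t \<and> h3 t = G3 t)"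
  moreover have "hsol a h1 h3 J \<Longrightarrow> J \<subseteq> {T<..}"
    using assms unfolding hsol_greatest_def by simp
  ultimately show "J = {T<..}" by auto
qed

lemma hmaxsol_eq_greatest:
  assumes "hsol_greatest a G1 G3 T" "hmaxsol a g1 g3 I"
  shows "I = {T<..}" "\<And>t. t > T \<Longrightarrow> g1 t = G1 t \<and> g3 t = G3 t"
proof -
  from assms(1) have G: "hsol a G1 G3 {T<..}"
    and greatest: "\<And>g1 g3 I. hsol a g1 g3 I \<Longrightarrow> I \<subseteq> {T<..} \<and> (\<forall>t\<in>I. g1 t = G1 t \<and> g3 t = G3 t)"
    unfolding hsol_greatest_def by auto
  from assms(2) have sol: "hsol a g1 g3 I"
    and maximal: "\<And>h1 h3 J. hsol a h1 h3 J \<Longrightarrow> I \<subseteq> J \<Longrightarrow> (\<forall>t\<in>I. h1 t = g1 t \<and> h3 t = g3 t) \<Longrightarrow> J = I"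
    unfolding hmaxsol_def by auto
  from greatest[OF sol] have sub: "I \<subseteq> {T<..}" and agree: "\<forall>t\<in>I. g1 t = G1 t \<and> g3 t = G3 t"
    by auto
  from maximal[OF G sub] agree show "I = {T<..}" by simp
  with agree show "\<And>t. t > T \<Longrightarrow> g1 t = G1 t \<and> g3 t = G3 t" by simp
qed

section \<open>The case \<open>a\<^sup>2 = 1\<close>\<close>

lemma hsol_greatest_unit:
  assumes "a\<^sup>2 = 1"
  shows "hsol_greatest a (\<lambda>t. sqrt (1 + 4 * t)) (\<lambda>t. 1) (- 1 / 4)"
  unfolding hsol_greatest_def
proof (intro conjI allI impI)
  show "hsol a (\<lambda>t. sqrt (1 + 4 * t)) (\<lambda>t. 1) {- 1 / 4<..}"
    unfolding hsol_def
  proof (intro conjI ballI)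
    fix t :: real assume "t \<in> {- 1 / 4<..}"
    then have "1 + 4 * t > 0" by simp
    then show "((\<lambda>t. sqrt (1 + 4 * t)) has_real_derivative
        (a\<^sup>2 + 1\<^sup>2) / (sqrt (1 + 4 * t) * 1)) (at t)"
      using assms by (auto intro!: derivative_eq_intros simp: field_simps)
  qed (use assms in \<open>auto simp: is_interval_1\<close>)
  fix g1 g3 I assume sol: "hsol a g1 g3 I"
  have g3_one: "g3 t = 1" if "t \<in> I" for t
    using hsol_conserved[OF sol that] hsol_pos[OF sol that] assms
    by (simp add: power2_eq_1_iff)
  have deriv: "((\<lambda>t. (g1 t)\<^sup>2 - 4 * t) has_real_derivative 0) (at s)" if "s \<in> I" for s
  proof -
    have "g1 s \<noteq> 0" "(g1 has_real_derivative (a\<^sup>2 + (g3 s)\<^sup>2) / (g1 s * g3 s)) (at s)"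
      using sol that unfolding hsol_def by auto
    then show ?thesis
      using assms g3_one[OF that] by (auto intro!: derivative_eq_intros simp: field_simps)
  qed
  have sq: "(g1 t)\<^sup>2 = 1 + 4 * t" if "t \<in> I" for t
    using hsol_deriv_zero_const[OF sol deriv that] sol unfolding hsol_def by simp
  show "I \<subseteq> {- 1 / 4<..}"
  proof
    fix t assume "t \<in> I"
    then have "0 < (g1 t)\<^sup>2" using hsol_pos(1)[OF sol] by (metis less_irrefl zero_less_power2)
    with sq[OF \<open>t \<in> I\<close>] show "t \<in> {- 1 / 4<..}" by simp
  qed
  show "\<forall>t\<in>I. g1 t = sqrt (1 + 4 * t) \<and> g3 t = 1"
    using sq hsol_pos(1)[OF sol] g3_one by (metis abs_of_pos real_sqrt_abs)
qed

lemma blowup_limits_unit: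
  assumes "a\<^sup>2 = 1"
  shows "blowup_limits a (- 1 / 4) (\<lambda>t. sqrt (1 + 4 * t)) (\<lambda>t. 1)"
proof -
  have "((\<lambda>t. sqrt (1 + 4 * t)) \<longlongrightarrow> sqrt (1 + 4 * (- 1 / 4))) (at_right (- 1 / 4 :: real))"
    by (intro tendsto_intros)
  with assms show ?thesis unfolding blowup_limits_def by (simp add: abs_square_eq_1)
qed

section \<open>The time function\<close>

text \<open>For \<open>a\<^sup>2 \<noteq> 1\<close> the values of \<open>g3\<close>: by the conservation law
  \<open>g1 = (a\<^sup>2 - 1) g3 / (a\<^sup>2 - g3\<^sup>2)\<close>, and \<open>g1\<close> is positive.\<close>
definition g3_range :: "real \<Rightarrow> real set" where
  "g3_range a = {x. 0 < x \<and> 0 < (a\<^sup>2 - x\<^sup>2) * (a\<^sup>2 - 1)}"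

lemma one_less_abs_iff_square: "1 < \<bar>x\<bar> \<longleftrightarrow> 1 < x\<^sup>2" for x :: real
  by (auto simp: power2_gt_1_iff)

lemma g3_range_lt:
  assumes "a\<^sup>2 < 1"
  shows "g3_range a = {\<bar>a\<bar><..}"
proof -
  have "0 < (a\<^sup>2 - x\<^sup>2) * (a\<^sup>2 - 1) \<longleftrightarrow> \<bar>a\<bar> < x" if "x > 0" for x
  proof -
    have "0 < (a\<^sup>2 - x\<^sup>2) * (a\<^sup>2 - 1) \<longleftrightarrow> a\<^sup>2 < x\<^sup>2" using assms by (auto simp: zero_less_mult_iff)
    also have "\<dots> \<longleftrightarrow> \<bar>a\<bar> < \<bar>x\<bar>" by (metis abs_le_square_iff not_le)
    finally show ?thesis using that by simp
  qed
  then show ?thesis unfolding g3_range_def by (auto simp: set_eq_iff cong: conj_cong)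
qed

lemma g3_range_gt:
  assumes "a\<^sup>2 > 1"
  shows "g3_range a = {0<..<\<bar>a\<bar>}"
proof -
  have "0 < (a\<^sup>2 - x\<^sup>2) * (a\<^sup>2 - 1) \<longleftrightarrow> x < \<bar>a\<bar>" if "x > 0" for x
  proof -
    have "0 < (a\<^sup>2 - x\<^sup>2) * (a\<^sup>2 - 1) \<longleftrightarrow> x\<^sup>2 < a\<^sup>2" using assms by (auto simp: zero_less_mult_iff)
    also have "\<dots> \<longleftrightarrow> \<bar>x\<bar> < \<bar>a\<bar>" by (metis abs_le_square_iff not_le)
    finally show ?thesis using that by simp
  qed
  then show ?thesis unfolding g3_range_def by (simp add: set_eq_iff cong: conj_cong)
qed

lemma one_in_g3_range: "a\<^sup>2 \<noteq> 1 \<Longrightarrow> 1 \<in> g3_range a"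
  unfolding g3_range_def by (auto simp: zero_less_mult_iff)

lemma g3_range_interval:
  assumes "a\<^sup>2 \<noteq> 1"
  shows "open (g3_range a)" "is_interval (g3_range a)"
  using assms by (cases "a\<^sup>2 < 1"; simp add: g3_range_lt g3_range_gt is_interval_1)+

lemma g3_rangeD:
  assumes "x \<in> g3_range a"
  shows "0 < x" "a\<^sup>2 - x\<^sup>2 \<noteq> 0" "a\<^sup>2 - 1 \<noteq> 0"
  using assms unfolding g3_range_def by auto

lemma has_real_derivative_inverse_on_open:
  fixes f g :: "real \<Rightarrow> real"
  assumes "(f has_real_derivative D) (at (g y))" "D \<noteq> 0" "open S" "continuous_on S f"
    "g y \<in> S" "f (g y) = y" "\<And>x. x \<in> S \<Longrightarrow> g (f x) = x"
  shows "(g has_real_derivative inverse D) (at y)"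
  using assms unfolding has_field_derivative_def
  by (intro has_derivative_inverse_strong_x[of S g y f]) auto

lemma time_density_sign:
  assumes "x \<in> g3_range a"
  shows "0 < (a\<^sup>2 - 1) * ((a\<^sup>2 - 1)\<^sup>2 * x\<^sup>2 / (a\<^sup>2 - x\<^sup>2) ^ 3)"
proof -
  define w k where "w = a\<^sup>2 - x\<^sup>2" and "k = a\<^sup>2 - 1"
  from assms have x: "0 < x" and prod: "0 < w * k"
    unfolding g3_range_def w_def k_def by auto
  then have "w \<noteq> 0" "k \<noteq> 0" by auto
  then have "k * (k\<^sup>2 * x\<^sup>2 / w ^ 3) = k\<^sup>2 * x\<^sup>2 * (w * k) / w ^ 4"
    by (simp add: field_simps eval_nat_numeral)
  also have "\<dots> > 0"
    using x prod \<open>w \<noteq> 0\<close> \<open>k \<noteq> 0\<close> by (intro divide_pos_pos mult_pos_pos[OF _ prod]) (auto simp: zero_less_power_eq)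
  finally show ?thesis unfolding w_def k_def .
qed

lemma hsol_g3_in_range:
  assumes "hsol a g1 g3 I" "t \<in> I" "a\<^sup>2 \<noteq> 1"
  shows "g3 t \<in> g3_range a" "g1 t = (a\<^sup>2 - 1) * g3 t / (a\<^sup>2 - (g3 t)\<^sup>2)"
proof -
  define w where "w = a\<^sup>2 - (g3 t)\<^sup>2"
  have pos: "g1 t > 0" "g3 t > 0" using hsol_pos[OF assms(1,2)] by auto
  have conserved: "g1 t * w / g3 t = a\<^sup>2 - 1" unfolding w_def by (rule hsol_conserved[OF assms(1,2)])
  with assms(3) have "w \<noteq> 0" by auto
  with conserved pos show "g1 t = (a\<^sup>2 - 1) * g3 t / (a\<^sup>2 - (g3 t)\<^sup>2)"
    unfolding w_def[symmetric] by (auto simp: field_simps)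
  have "w * (a\<^sup>2 - 1) = w\<^sup>2 * g1 t / g3 t"
    unfolding conserved[symmetric] by (simp add: power2_eq_square)
  also have "\<dots> > 0" using pos \<open>w \<noteq> 0\<close> by simp
  finally show "g3 t \<in> g3_range a" unfolding g3_range_def w_def using pos by simp
qed

text \<open>\<open>Phi x\<close> is the time at which a solution passes through \<open>g3 = x\<close> (see \<open>hsol_time\<close>);
  its derivative is \<open>1 / g3'\<close> expressed through \<open>g3\<close>.\<close>
locale time_potential =
  fixes a T :: real and Phi :: "real \<Rightarrow> real"
  assumes a_sq_ne_1: "a\<^sup>2 \<noteq> 1"
    and Phi_deriv: "\<And>x. x \<in> g3_range a \<Longrightarrow>
      (Phi has_real_derivative (a\<^sup>2 - 1)\<^sup>2 * x\<^sup>2 / (a\<^sup>2 - x\<^sup>2) ^ 3) (at x)"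
    and Phi_1: "Phi 1 = 0"
    and Phi_gt: "\<And>x. x \<in> g3_range a \<Longrightarrow> T < Phi x"
    and Phi_below: "\<And>t. T < t \<Longrightarrow> \<exists>x\<in>g3_range a. Phi x < t"
    and Phi_above: "\<And>t. \<exists>x\<in>g3_range a. t < Phi x"
begin

lemma Phi_strict_antimono:
  assumes "a\<^sup>2 < 1" "x \<in> g3_range a" "y \<in> g3_range a" "x < y"
  shows "Phi y < Phi x"
proof (rule DERIV_neg_imp_decreasing[OF assms(4)])
  fix z assume "x \<le> z" "z \<le> y"
  with assms have z: "z \<in> g3_range a" by (auto simp: g3_range_lt)
  have "(a\<^sup>2 - 1)\<^sup>2 * z\<^sup>2 / (a\<^sup>2 - z\<^sup>2) ^ 3 < 0"
    using time_density_sign[OF z] assms(1) unfolding zero_less_mult_iff by linarith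
  with Phi_deriv[OF z] show "\<exists>d. (Phi has_real_derivative d) (at z) \<and> d < 0" by blast
qed

lemma Phi_strict_mono:
  assumes "a\<^sup>2 > 1" "x \<in> g3_range a" "y \<in> g3_range a" "x < y"
  shows "Phi x < Phi y"
proof (rule DERIV_pos_imp_increasing[OF assms(4)])
  fix z assume "x \<le> z" "z \<le> y"
  with assms have z: "z \<in> g3_range a" by (auto simp: g3_range_gt)
  have "(a\<^sup>2 - 1)\<^sup>2 * z\<^sup>2 / (a\<^sup>2 - z\<^sup>2) ^ 3 > 0"
    using time_density_sign[OF z] assms(1) unfolding zero_less_mult_iff by linarith
  with Phi_deriv[OF z] show "\<exists>d. (Phi has_real_derivative d) (at z) \<and> d > 0" by blast
qed

lemma Phi_inj_on: "inj_on Phi (g3_range a)"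
proof (rule linorder_inj_onI')
  fix x y assume "x \<in> g3_range a" "y \<in> g3_range a" "x < y"
  then show "Phi x \<noteq> Phi y"
    using a_sq_ne_1 Phi_strict_antimono Phi_strict_mono by (cases "a\<^sup>2 < 1") force+
qed

lemma Phi_image: "Phi ` g3_range a = {T<..}"
proof
  show "Phi ` g3_range a \<subseteq> {T<..}" using Phi_gt by auto
  have "continuous_on (g3_range a) Phi"
    using Phi_deriv by (meson DERIV_isCont continuous_at_imp_continuous_on)
  then have "is_interval (Phi ` g3_range a)"
    using g3_range_interval(2)[OF a_sq_ne_1] connected_continuous_image is_interval_connected_1 by blast
  show "{T<..} \<subseteq> Phi ` g3_range a"
  proof
    fix t assume "t \<in> {T<..}"
    then obtain x y where "x \<in> g3_range a" "Phi x < t" "y \<in> g3_range a" "t < Phi y"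
      using Phi_below Phi_above by force
    with \<open>is_interval (Phi ` g3_range a)\<close> show "t \<in> Phi ` g3_range a"
      unfolding is_interval_1 by (meson image_eqI less_imp_le)
  qed
qed

definition G3 :: "real \<Rightarrow> real" where
  "G3 = the_inv_into (g3_range a) Phi"

definition G1 :: "real \<Rightarrow> real" where
  "G1 t = (a\<^sup>2 - 1) * G3 t / (a\<^sup>2 - (G3 t)\<^sup>2)"

lemma G3_in_range: "T < t \<Longrightarrow> G3 t \<in> g3_range a"
  unfolding G3_def using Phi_image Phi_inj_on by (metis greaterThan_iff the_inv_into_into order_refl)

lemma Phi_G3: "T < t \<Longrightarrow> Phi (G3 t) = t"
  unfolding G3_def using Phi_image Phi_inj_on by (metis greaterThan_iff f_the_inv_into_f)

lemma G3_Phi: "x \<in> g3_range a \<Longrightarrow> G3 (Phi x) = x"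
  unfolding G3_def using Phi_inj_on by (rule the_inv_into_f_f)

lemma T_neg: "T < 0"
  using Phi_gt[OF one_in_g3_range[OF a_sq_ne_1]] Phi_1 by simp

lemma G3_0: "G3 0 = 1"
  using G3_Phi[OF one_in_g3_range[OF a_sq_ne_1]] Phi_1 by simp

lemma G3_deriv:
  assumes "T < t"
  shows "(G3 has_real_derivative (a\<^sup>2 - (G3 t)\<^sup>2) / (G1 t)\<^sup>2) (at t)"
proof -
  have x: "G3 t \<in> g3_range a" by (rule G3_in_range[OF assms])
  note ne = g3_rangeD[OF x]
  have "(G3 has_real_derivative inverse ((a\<^sup>2 - 1)\<^sup>2 * (G3 t)\<^sup>2 / (a\<^sup>2 - (G3 t)\<^sup>2) ^ 3)) (at t)"
  proof (rule has_real_derivative_inverse_on_open)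
    show "(a\<^sup>2 - 1)\<^sup>2 * (G3 t)\<^sup>2 / (a\<^sup>2 - (G3 t)\<^sup>2) ^ 3 \<noteq> 0" using ne by simp
    show "continuous_on (g3_range a) Phi"
      using Phi_deriv by (meson DERIV_isCont continuous_at_imp_continuous_on)
  qed (use x Phi_deriv Phi_G3[OF assms] G3_Phi g3_range_interval(1)[OF a_sq_ne_1] in auto)
  also have "inverse ((a\<^sup>2 - 1)\<^sup>2 * (G3 t)\<^sup>2 / (a\<^sup>2 - (G3 t)\<^sup>2) ^ 3) = (a\<^sup>2 - (G3 t)\<^sup>2) / (G1 t)\<^sup>2"
    unfolding G1_def using ne by (simp add: field_simps eval_nat_numeral)
  finally show ?thesis .
qed

lemma G_hsol: "hsol a G1 G3 {T<..}"
  unfolding hsol_def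
proof (intro conjI ballI)
  fix t assume "t \<in> {T<..}"
  then have t: "T < t" by simp
  note ne = g3_rangeD[OF G3_in_range[OF t]]
  then show "G1 t \<noteq> 0" "G3 t \<noteq> 0" unfolding G1_def by auto
  show "(G3 has_real_derivative (a\<^sup>2 - (G3 t)\<^sup>2) / (G1 t)\<^sup>2) (at t)" by (rule G3_deriv[OF t])
  have f: "((\<lambda>x. (a\<^sup>2 - 1) * x / (a\<^sup>2 - x\<^sup>2)) has_real_derivative
      (a\<^sup>2 - 1) * (a\<^sup>2 + (G3 t)\<^sup>2) / (a\<^sup>2 - (G3 t)\<^sup>2)\<^sup>2) (at (G3 t))"
    using ne by (auto intro!: derivative_eq_intros simp: field_simps power2_eq_square)
  have chain: "(G1 has_real_derivative (a\<^sup>2 - 1) * (a\<^sup>2 + (G3 t)\<^sup>2) / (a\<^sup>2 - (G3 t)\<^sup>2)\<^sup>2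
      * ((a\<^sup>2 - (G3 t)\<^sup>2) / (G1 t)\<^sup>2)) (at t)"
    using DERIV_chain2[OF f G3_deriv[OF t]] by (simp only: G1_def[abs_def])
  have alg: "k * s / w\<^sup>2 * (w / G\<^sup>2) = s / (G * y)"
    if "k = G * w / y" "G \<noteq> 0" "y \<noteq> 0" "w \<noteq> 0" for k s w G y :: real
    using that by (simp add: field_simps power2_eq_square)
  have G1_rel: "a\<^sup>2 - 1 = G1 t * (a\<^sup>2 - (G3 t)\<^sup>2) / G3 t" "G1 t \<noteq> 0" "G3 t \<noteq> 0"
    using ne unfolding G1_def by auto
  from chain show "(G1 has_real_derivative (a\<^sup>2 + (G3 t)\<^sup>2) / (G1 t * G3 t)) (at t)"
    unfolding alg[OF G1_rel ne(2)] .
qed (use T_neg G3_0 a_sq_ne_1 in \<open>auto simp: G1_def is_interval_1\<close>)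

lemma hsol_time:
  assumes sol: "hsol a g1 g3 I" and t: "t \<in> I"
  shows "Phi (g3 t) = t"
proof -
  have deriv: "((\<lambda>t. Phi (g3 t) - t) has_real_derivative 0) (at s)" if s: "s \<in> I" for s
  proof -
    note range = hsol_g3_in_range[OF sol s a_sq_ne_1]
    have "(g3 has_real_derivative (a\<^sup>2 - (g3 s)\<^sup>2) / (g1 s)\<^sup>2) (at s)"
      using sol s unfolding hsol_def by blast
    from DERIV_chain2[OF Phi_deriv[OF range(1)] this]
    have "((\<lambda>t. Phi (g3 t)) has_real_derivative
        (a\<^sup>2 - 1)\<^sup>2 * (g3 s)\<^sup>2 / (a\<^sup>2 - (g3 s)\<^sup>2) ^ 3 * ((a\<^sup>2 - (g3 s)\<^sup>2) / (g1 s)\<^sup>2)) (at s)" .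
    moreover have "k\<^sup>2 * y\<^sup>2 / w ^ 3 * (w / G\<^sup>2) = 1"
      if "G = k * y / w" "k \<noteq> 0" "y \<noteq> 0" "w \<noteq> 0" for k y w G :: real
      using that by (simp add: field_simps eval_nat_numeral)
    ultimately show ?thesis
      using range(2) g3_rangeD[OF range(1)] by (auto intro!: derivative_eq_intros)
  qed
  from hsol_deriv_zero_const[OF sol deriv t] sol Phi_1 show ?thesis
    unfolding hsol_def by simp
qed

lemma G_greatest: "hsol_greatest a G1 G3 T"
  unfolding hsol_greatest_def
proof (intro conjI allI impI G_hsol)
  fix g1 g3 I assume sol: "hsol a g1 g3 I"
  have agree: "T < t \<and> g1 t = G1 t \<and> g3 t = G3 t" if t: "t \<in> I" for t
  proof -
    note range = hsol_g3_in_range[OF sol t a_sq_ne_1]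
    have "T < t" using Phi_gt[OF range(1)] hsol_time[OF sol t] by simp
    moreover have "G3 t = g3 t" using G3_Phi[OF range(1)] hsol_time[OF sol t] by simp
    ultimately show ?thesis using range(2) unfolding G1_def by simp
  qed
  then show "I \<subseteq> {T<..}" by auto
  show "\<forall>t\<in>I. g1 t = G1 t \<and> g3 t = G3 t" using agree by simp
qed

lemma eventually_below_Phi:
  assumes "x \<in> g3_range a"
  shows "eventually (\<lambda>t. T < t \<and> t < Phi x) (at_right T)"
  using eventually_at_right_real[OF Phi_gt[OF assms]] unfolding greaterThanLessThan_iff .

lemma G3_tendsto_at_top:
  assumes "a\<^sup>2 < 1"
  shows "filterlim G3 at_top (at_right T)"
  unfolding filterlim_at_top
proof
  fix Z :: real
  define x where "x = max Z (\<bar>a\<bar> + 1)"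
  have x: "x \<in> g3_range a" using g3_range_lt[OF assms] unfolding x_def by simp
  show "eventually (\<lambda>t. Z \<le> G3 t) (at_right T)"
    using eventually_below_Phi[OF x]
  proof eventually_elim
    case (elim t)
    then have "T < t" by simp
    have "\<not> G3 t < x"
    proof
      assume "G3 t < x"
      from Phi_strict_antimono[OF assms G3_in_range[OF \<open>T < t\<close>] x this] Phi_G3 elim show False by simp
    qed
    then show "Z \<le> G3 t" unfolding x_def by simp
  qed
qed

lemma G3_tendsto_0:
  assumes "a\<^sup>2 > 1"
  shows "(G3 \<longlongrightarrow> 0) (at_right T)"
proof (rule order_tendstoI)
  fix e :: real assume "e < 0"
  show "eventually (\<lambda>t. e < G3 t) (at_right T)"
    using eventually_at_right_less[of T]
    by eventually_elim (use \<open>e < 0\<close> g3_rangeD(1)[OF G3_in_range] in force)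
next
  fix e :: real assume "0 < e"
  obtain x where "0 < x" "x < e" "x < 1"
    using field_lbound_gt_zero[OF \<open>0 < e\<close> zero_less_one] by blast
  have "1 < \<bar>a\<bar>" using assms by (simp add: one_less_abs_iff_square)
  with \<open>x < 1\<close> \<open>0 < x\<close> have x: "x \<in> g3_range a" using g3_range_gt[OF assms] by simp
  show "eventually (\<lambda>t. G3 t < e) (at_right T)"
    using eventually_below_Phi[OF x]
  proof eventually_elim
    case (elim t)
    then have "T < t" by simp
    have "\<not> x < G3 t"
    proof
      assume "x < G3 t"
      from Phi_strict_mono[OF assms x G3_in_range[OF \<open>T < t\<close>] this] Phi_G3 elim show False by simp
    qed
    with \<open>x < e\<close> show "G3 t < e" by linarith
  qed
qed

lemma G_blowup_limits: "blowup_limits a T G1 G3"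
proof -
  have G1_comp: "G1 = (\<lambda>t. (\<lambda>x. (a\<^sup>2 - 1) * x / (a\<^sup>2 - x\<^sup>2)) (G3 t))"
    by (simp add: G1_def[abs_def])
  consider "a\<^sup>2 < 1" | "a\<^sup>2 > 1" using a_sq_ne_1 by linarith
  then show ?thesis
  proof cases
    case 1
    have "((\<lambda>x. (a\<^sup>2 - 1) * x / (a\<^sup>2 - x\<^sup>2)) \<longlongrightarrow> 0) at_top" by real_asymp
    from filterlim_compose[OF this G3_tendsto_at_top[OF 1]]
    have "(G1 \<longlongrightarrow> 0) (at_right T)" unfolding G1_comp .
    moreover have "\<bar>a\<bar> < 1" using 1 by (simp add: abs_square_less_1)
    ultimately show ?thesis unfolding blowup_limits_def using G3_tendsto_at_top[OF 1]
      by (intro conjI impI) (assumption | linarith)+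
  next
    case 2
    have "((\<lambda>t. (a\<^sup>2 - 1) * G3 t / (a\<^sup>2 - (G3 t)\<^sup>2)) \<longlongrightarrow> (a\<^sup>2 - 1) * 0 / (a\<^sup>2 - 0\<^sup>2)) (at_right T)"
      by (intro tendsto_divide tendsto_mult tendsto_diff tendsto_const tendsto_power G3_tendsto_0[OF 2])
        (use 2 in auto)
    then have "(G1 \<longlongrightarrow> 0) (at_right T)" unfolding G1_def[abs_def] by simp
    moreover have "\<bar>a\<bar> > 1" using 2 by (simp add: one_less_abs_iff_square)
    ultimately show ?thesis unfolding blowup_limits_def using G3_tendsto_0[OF 2]
      by (intro conjI impI) (assumption | linarith)+
  qed
qed

end

lemma time_potentialI:
  fixes a T :: real and Phi :: "real \<Rightarrow> real" and F G :: "real filter"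
  assumes "a\<^sup>2 \<noteq> 1"
    and "\<And>x. x \<in> g3_range a \<Longrightarrow>
      (Phi has_real_derivative (a\<^sup>2 - 1)\<^sup>2 * x\<^sup>2 / (a\<^sup>2 - x\<^sup>2) ^ 3) (at x)"
    and "Phi 1 = 0" "\<And>x. x \<in> g3_range a \<Longrightarrow> T < Phi x"
    and "(Phi \<longlongrightarrow> T) F" "F \<noteq> bot" "eventually (\<lambda>x. x \<in> g3_range a) F"
    and "filterlim Phi at_top G" "G \<noteq> bot" "eventually (\<lambda>x. x \<in> g3_range a) G"
  shows "time_potential a T Phi"
proof
  fix t assume "T < t"
  have "eventually (\<lambda>x. x \<in> g3_range a \<and> Phi x < t) F"
    using assms(7) order_tendstoD(2)[OF assms(5) \<open>T < t\<close>] by (rule eventually_conj)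
  then show "\<exists>x\<in>g3_range a. Phi x < t" using eventually_happens'[OF assms(6)] by blast
next
  fix t
  have "eventually (\<lambda>x. x \<in> g3_range a \<and> t < Phi x) G"
    using assms(10) filterlim_at_top_dense[THEN iffD1, OF assms(8), rule_format, of t]
    by (rule eventually_conj)
  then show "\<exists>x\<in>g3_range a. t < Phi x" using eventually_happens'[OF assms(9)] by blast
qed (use assms in auto)

section \<open>An explicit time function\<close>

text \<open>A primitive of \<open>x\<^sup>2 / (x\<^sup>2 - b\<^sup>2)\<^sup>3\<close> found by partial fractions. It vanishes both at \<open>0\<close>
  and at \<open>\<infinity>\<close>, so the same formula serves \<open>|a| < 1\<close> (where \<open>g3 \<in> (|a|, \<infinity>)\<close>) and
  \<open>|a| > 1\<close> (where \<open>g3 \<in> (0, |a|)\<close>).\<close>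
definition antiderivative :: "real \<Rightarrow> real \<Rightarrow> real" where
  "antiderivative b x = - x / (4 * (x\<^sup>2 - b\<^sup>2)\<^sup>2) - x / (8 * b\<^sup>2 * (x\<^sup>2 - b\<^sup>2))
     - (ln ((x - b)\<^sup>2) - ln ((x + b)\<^sup>2)) / (32 * b ^ 3)"

lemma has_real_derivative_ln_square:
  fixes x c :: real
  assumes "x \<noteq> c"
  shows "((\<lambda>x. ln ((x - c)\<^sup>2)) has_real_derivative 2 / (x - c)) (at x)"
proof -
  have "0 < (x - c)\<^sup>2" using assms by simp
  then have "((\<lambda>x. ln ((x - c)\<^sup>2)) has_real_derivative 2 * (x - c) / (x - c)\<^sup>2) (at x)"
    by (auto intro!: derivative_eq_intros)
  moreover have "2 * d / d\<^sup>2 = 2 / d" if "d \<noteq> 0" for d :: real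
    using that by (simp add: power2_eq_square)
  ultimately show ?thesis using assms by (metis eq_iff_diff_eq_0)
qed

lemma ln_square_ratio_deriv:
  fixes b x :: real
  assumes "b > 0" "x - b \<noteq> 0" "x + b \<noteq> 0"
  shows "((\<lambda>x. (ln ((x - b)\<^sup>2) - ln ((x + b)\<^sup>2)) / (32 * b ^ 3)) has_real_derivative
      1 / (8 * b\<^sup>2 * ((x - b) * (x + b)))) (at x)"
proof -
  have "(2 / p - 2 / q) / (32 * b ^ 3) = 1 / (8 * b\<^sup>2 * (p * q))"
    if "p \<noteq> 0" "q \<noteq> 0" "q - p = 2 * b" for p q :: real
  proof -
    have "2 / p - 2 / q = 2 * (q - p) / (p * q)" using that by (simp add: field_simps)
    also have "\<dots> = 4 * b / (p * q)" using that(3) by simp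
    finally show ?thesis using that(1,2) assms(1) by (simp add: field_simps power2_eq_square power3_eq_cube)
  qed
  from this[of "x - b" "x + b"] assms(2,3)
  have "(2 / (x - b) - 2 / (x + b)) / (32 * b ^ 3) = 1 / (8 * b\<^sup>2 * ((x - b) * (x + b)))"
    by simp
  with DERIV_cdivide[OF DERIV_diff[OF has_real_derivative_ln_square has_real_derivative_ln_square],
      of x b "- b" "32 * b ^ 3"] assms(2,3)
  show ?thesis by simp
qed

lemma antiderivative_deriv:
  assumes "b > 0" "x > - b" "x \<noteq> b"
  shows "(antiderivative b has_real_derivative x\<^sup>2 / (x\<^sup>2 - b\<^sup>2) ^ 3) (at x)"
proof -
  obtain s where s: "x\<^sup>2 - b\<^sup>2 = s" by simp
  have ne: "x - b \<noteq> 0" "x + b \<noteq> 0" "s \<noteq> 0"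
    using assms by (auto simp flip: s simp: power2_eq_square square_diff_square_factored)
  \<comment> \<open>the left-hand sides of \<open>algA\<close> and \<open>algB\<close> are the quotient-rule derivatives in simp normal form\<close>
  have algA: "(x * (16 * (x * s)) - 4 * s\<^sup>2) / (16 * s ^ 4) = x\<^sup>2 / s ^ 3 - 1 / (4 * s\<^sup>2)"
    using ne(3) by (simp add: field_simps eval_nat_numeral)
  have dA: "((\<lambda>x. - x / (4 * (x\<^sup>2 - b\<^sup>2)\<^sup>2)) has_real_derivative x\<^sup>2 / s ^ 3 - 1 / (4 * s\<^sup>2)) (at x)"
    by (rule derivative_eq_intros refl)+ (simp_all add: s ne(3) algA)
  have algB: "(8 * b\<^sup>2 * s - x * (16 * (x * b\<^sup>2))) / (64 * (b\<^sup>2 * (s * (b\<^sup>2 * s))))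
      = 1 / (8 * b\<^sup>2 * s) - x\<^sup>2 / (4 * b\<^sup>2 * s\<^sup>2)"
    using ne(3) assms(1) by (simp add: divide_simps) algebra
  have dB: "((\<lambda>x. x / (8 * b\<^sup>2 * (x\<^sup>2 - b\<^sup>2))) has_real_derivative
      1 / (8 * b\<^sup>2 * s) - x\<^sup>2 / (4 * b\<^sup>2 * s\<^sup>2)) (at x)"
    by (rule derivative_eq_intros refl)+ (use assms(1) ne(3) in \<open>simp_all add: s algB\<close>)
  have "(x - b) * (x + b) = s" unfolding s[symmetric] by (simp add: power2_eq_square algebra_simps)
  with ln_square_ratio_deriv[OF assms(1) ne(1,2)]
  have dC: "((\<lambda>x. (ln ((x - b)\<^sup>2) - ln ((x + b)\<^sup>2)) / (32 * b ^ 3)) has_real_derivative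
      1 / (8 * b\<^sup>2 * s)) (at x)" by simp
  have "x\<^sup>2 / s ^ 3 - 1 / (4 * s\<^sup>2) - (1 / (8 * b\<^sup>2 * s) - x\<^sup>2 / (4 * b\<^sup>2 * s\<^sup>2)) - 1 / (8 * b\<^sup>2 * s)
      = x\<^sup>2 / s ^ 3"
    using ne(3) assms(1) s by (simp add: divide_simps) algebra
  with DERIV_diff[OF DERIV_diff[OF dA dB] dC] show ?thesis
    unfolding antiderivative_def[abs_def] s by simp
qed

lemma antiderivative_at_top: "b > 0 \<Longrightarrow> (antiderivative b \<longlongrightarrow> 0) at_top"
  unfolding antiderivative_def[abs_def] by real_asymp

lemma antiderivative_at_bot: "b > 0 \<Longrightarrow> filterlim (antiderivative b) at_bot (at b)"
  unfolding antiderivative_def[abs_def]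
  by (intro filterlim_split_at; real_asymp)

lemma antiderivative_0: "antiderivative b 0 = 0"
  unfolding antiderivative_def by simp

lemma antiderivative_neg:
  assumes "b > 0" "x > 0" "x \<noteq> b"
  shows "antiderivative b x < 0"
proof (cases "x < b")
  case True
  have "(antiderivative b has_real_derivative y\<^sup>2 / (y\<^sup>2 - b\<^sup>2) ^ 3) (at y)" if "0 \<le> y" "y \<le> x" for y
    by (rule antiderivative_deriv) (use that assms True in auto)
  then obtain z where z: "0 < z" "z < x"
    and mvt: "antiderivative b x - antiderivative b 0 = (x - 0) * (z\<^sup>2 / (z\<^sup>2 - b\<^sup>2) ^ 3)"
    using MVT2[OF assms(2), of "antiderivative b" "\<lambda>y. y\<^sup>2 / (y\<^sup>2 - b\<^sup>2) ^ 3"] by blast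
  have "z\<^sup>2 < b\<^sup>2" using z True assms(1) by (simp add: power_strict_mono)
  then have "z\<^sup>2 / (z\<^sup>2 - b\<^sup>2) ^ 3 < 0" using z by (simp add: divide_pos_neg)
  from mult_pos_neg[OF assms(2) this] mvt show ?thesis by (simp add: antiderivative_0)
next
  case False
  with assms have "b < x" by simp
  have "0 < - antiderivative b x"
  proof (rule DERIV_neg_imp_decreasing_at_top[where f = "\<lambda>y. - antiderivative b y" and flim = 0])
    fix y assume "x \<le> y"
    with \<open>b < x\<close> assms(1) have "0 < y\<^sup>2 / (y\<^sup>2 - b\<^sup>2) ^ 3" by (simp add: power_strict_mono)
    moreover have "((\<lambda>y. - antiderivative b y) has_real_derivative - (y\<^sup>2 / (y\<^sup>2 - b\<^sup>2) ^ 3)) (at y)"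
      using \<open>x \<le> y\<close> \<open>b < x\<close> assms(1) by (intro DERIV_minus antiderivative_deriv) auto
    ultimately show "\<exists>d. ((\<lambda>y. - antiderivative b y) has_real_derivative d) (at y) \<and> d < 0"
      by (intro exI[of _ "- (y\<^sup>2 / (y\<^sup>2 - b\<^sup>2) ^ 3)"]) simp
  next
    show "((\<lambda>y. - antiderivative b y) \<longlongrightarrow> 0) at_top"
      using tendsto_minus[OF antiderivative_at_top[OF assms(1)]] by simp
  qed
  then show ?thesis by simp
qed

text \<open>For \<open>a = 0\<close> the primitive is elementary; \<open>antiderivative\<close> divides by \<open>b\<^sup>3\<close>.\<close>
definition reduced_time :: "real \<Rightarrow> real \<Rightarrow> real" where
  "reduced_time a x = (if a = 0 then (1 / x ^ 3 - 1) / 3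
     else (1 - a\<^sup>2)\<^sup>2 * (antiderivative \<bar>a\<bar> 1 - antiderivative \<bar>a\<bar> x))"

text \<open>The limit of \<open>reduced_time a\<close> at the end of \<open>g3_range a\<close> where it stays bounded
  (\<open>\<infinity>\<close> for \<open>|a| < 1\<close>, \<open>0\<close> for \<open>|a| > 1\<close>).\<close>
definition blowup_time :: "real \<Rightarrow> real" where
  "blowup_time a = (if a = 0 then - 1 / 3 else if \<bar>a\<bar> = 1 then - 1 / 4
     else (1 - a\<^sup>2)\<^sup>2 * antiderivative \<bar>a\<bar> 1)"

lemma reduced_time_1: "reduced_time a 1 = 0"
  unfolding reduced_time_def by simp

lemma reduced_time_eq:
  "a \<noteq> 0 \<Longrightarrow> reduced_time a = (\<lambda>x. (1 - a\<^sup>2)\<^sup>2 * (antiderivative \<bar>a\<bar> 1 - antiderivative \<bar>a\<bar> x))"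
  unfolding reduced_time_def by auto

lemma reduced_time_deriv:
  assumes "x \<in> g3_range a"
  shows "(reduced_time a has_real_derivative (a\<^sup>2 - 1)\<^sup>2 * x\<^sup>2 / (a\<^sup>2 - x\<^sup>2) ^ 3) (at x)"
proof (cases "a = 0")
  case True
  have "0 < x" using g3_rangeD(1)[OF assms] .
  then have "((\<lambda>x. (1 / x ^ 3 - 1) / 3) has_real_derivative (0\<^sup>2 - 1)\<^sup>2 * x\<^sup>2 / (0\<^sup>2 - x\<^sup>2) ^ 3) (at x)"
    by (auto intro!: derivative_eq_intros simp: field_simps eval_nat_numeral)
  then show ?thesis using True unfolding reduced_time_def[abs_def] by simp
next
  case False
  have "0 < x" "a\<^sup>2 - x\<^sup>2 \<noteq> 0" using g3_rangeD[OF assms] by auto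
  then have "x \<noteq> \<bar>a\<bar>" by auto
  with \<open>0 < x\<close> False have "((\<lambda>x. (1 - a\<^sup>2)\<^sup>2 * (antiderivative \<bar>a\<bar> 1 - antiderivative \<bar>a\<bar> x))
      has_real_derivative (1 - a\<^sup>2)\<^sup>2 * (0 - x\<^sup>2 / (x\<^sup>2 - \<bar>a\<bar>\<^sup>2) ^ 3)) (at x)"
    by (intro DERIV_cmult DERIV_diff DERIV_const antiderivative_deriv) auto
  moreover have "(x\<^sup>2 - a\<^sup>2) ^ 3 = - ((a\<^sup>2 - x\<^sup>2) ^ 3)" by (simp add: power3_eq_cube algebra_simps)
  ultimately show ?thesis using False unfolding reduced_time_def[abs_def] by (simp add: power2_commute)
qed

lemma blowup_time_less_reduced_time:
  assumes "x \<in> g3_range a" "a\<^sup>2 \<noteq> 1"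
  shows "blowup_time a < reduced_time a x"
proof (cases "a = 0")
  case True
  with g3_rangeD(1)[OF assms(1)] show ?thesis unfolding blowup_time_def reduced_time_def by simp
next
  case False
  have "0 < x" "a\<^sup>2 - x\<^sup>2 \<noteq> 0" using g3_rangeD[OF assms(1)] by auto
  then have "antiderivative \<bar>a\<bar> x < 0" using False by (intro antiderivative_neg) auto
  moreover have "\<bar>a\<bar> \<noteq> 1" "0 < (1 - a\<^sup>2)\<^sup>2" using assms(2) by (auto simp: abs_square_eq_1)
  ultimately have "(1 - a\<^sup>2)\<^sup>2 * antiderivative \<bar>a\<bar> x < 0" by (simp add: mult_pos_neg)
  with False \<open>\<bar>a\<bar> \<noteq> 1\<close> show ?thesis unfolding blowup_time_def reduced_time_def
    by (simp add: algebra_simps)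
qed

lemma reduced_time_tendsto:
  assumes "a \<noteq> 0" "\<bar>a\<bar> \<noteq> 1" "(antiderivative \<bar>a\<bar> \<longlongrightarrow> 0) F"
  shows "(reduced_time a \<longlongrightarrow> blowup_time a) F"
proof -
  have "((\<lambda>x. (1 - a\<^sup>2)\<^sup>2 * (antiderivative \<bar>a\<bar> 1 - antiderivative \<bar>a\<bar> x))
      \<longlongrightarrow> (1 - a\<^sup>2)\<^sup>2 * (antiderivative \<bar>a\<bar> 1 - 0)) F"
    by (intro tendsto_intros assms(3))
  with assms(1,2) show ?thesis by (simp add: reduced_time_eq blowup_time_def)
qed

lemma reduced_time_at_top:
  assumes "a \<noteq> 0" "\<bar>a\<bar> \<noteq> 1" "filterlim (antiderivative \<bar>a\<bar>) at_bot F"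
  shows "filterlim (reduced_time a) at_top F"
proof -
  have "0 < (1 - a\<^sup>2)\<^sup>2" using assms(2) by (simp add: abs_square_eq_1)
  moreover have "filterlim (\<lambda>x. antiderivative \<bar>a\<bar> 1 + - antiderivative \<bar>a\<bar> x) at_top F"
    using filterlim_uminus_at_bot[THEN iffD1, OF assms(3)] by (rule filterlim_tendsto_add_at_top[OF tendsto_const])
  ultimately have "filterlim (\<lambda>x. (1 - a\<^sup>2)\<^sup>2 * (antiderivative \<bar>a\<bar> 1 + - antiderivative \<bar>a\<bar> x)) at_top F"
    by (rule filterlim_tendsto_pos_mult_at_top[OF tendsto_const])
  with assms(1) show ?thesis by (simp add: reduced_time_eq)
qed

lemma time_potential_reduced_time:
  assumes "a\<^sup>2 \<noteq> 1"
  shows "time_potential a (blowup_time a) (reduced_time a)"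
proof -
  have potentialI: "time_potential a (blowup_time a) (reduced_time a)"
    if "(reduced_time a \<longlongrightarrow> blowup_time a) F" "F \<noteq> bot" "eventually (\<lambda>x. x \<in> g3_range a) F"
      and "filterlim (reduced_time a) at_top G" "G \<noteq> bot" "eventually (\<lambda>x. x \<in> g3_range a) G"
    for F G
    using assms reduced_time_deriv reduced_time_1 blowup_time_less_reduced_time[OF _ assms] that
    by (rule time_potentialI)
  have a: "\<bar>a\<bar> \<noteq> 1" using assms by (simp add: abs_square_eq_1)
  consider "a = 0" | "a \<noteq> 0" "a\<^sup>2 < 1" | "a\<^sup>2 > 1" using assms by fastforce
  then show ?thesis
  proof cases
    case 1
    have "((\<lambda>x::real. (1 / x ^ 3 - 1) / 3) \<longlongrightarrow> - 1 / 3) at_top"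
      and "filterlim (\<lambda>x::real. (1 / x ^ 3 - 1) / 3) at_top (at_right 0)"
      by real_asymp+
    then have lim: "(reduced_time a \<longlongrightarrow> blowup_time a) at_top"
      and top: "filterlim (reduced_time a) at_top (at_right 0)"
      using 1 by (simp_all add: reduced_time_def[abs_def] blowup_time_def)
    show ?thesis
      by (rule potentialI[OF lim _ _ top])
        (use 1 in \<open>auto simp: g3_range_lt eventually_gt_at_top eventually_at_right_less\<close>)
  next
    case 2
    then have "0 < \<bar>a\<bar>" by simp
    have lim: "(reduced_time a \<longlongrightarrow> blowup_time a) at_top"
      using 2(1) a antiderivative_at_top[OF \<open>0 < \<bar>a\<bar>\<close>] by (rule reduced_time_tendsto)
    have top: "filterlim (reduced_time a) at_top (at_right \<bar>a\<bar>)"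
      using 2(1) a filterlim_mono[OF antiderivative_at_bot[OF \<open>0 < \<bar>a\<bar>\<close>] order_refl at_within_le_at]
      by (rule reduced_time_at_top)
    show ?thesis
      by (rule potentialI[OF lim _ _ top])
        (use 2 in \<open>auto simp: g3_range_lt eventually_gt_at_top eventually_at_right_less\<close>)
  next
    case 3
    then have "0 < \<bar>a\<bar>" "a \<noteq> 0" by auto
    have "isCont (antiderivative \<bar>a\<bar>) 0"
      using antiderivative_deriv[of "\<bar>a\<bar>" 0] \<open>0 < \<bar>a\<bar>\<close> by (auto intro: DERIV_isCont)
    then have "(antiderivative \<bar>a\<bar> \<longlongrightarrow> 0) (at_right 0)"
      unfolding isCont_def antiderivative_0 by (rule tendsto_mono[OF at_within_le_at])
    with \<open>a \<noteq> 0\<close> a have lim: "(reduced_time a \<longlongrightarrow> blowup_time a) (at_right 0)"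
      by (rule reduced_time_tendsto)
    have top: "filterlim (reduced_time a) at_top (at_left \<bar>a\<bar>)"
      using \<open>a \<noteq> 0\<close> a filterlim_mono[OF antiderivative_at_bot[OF \<open>0 < \<bar>a\<bar>\<close>] order_refl at_within_le_at]
      by (rule reduced_time_at_top)
    show ?thesis
      by (rule potentialI[OF lim _ _ top]) (use 3 eventually_at_right_real[OF \<open>0 < \<bar>a\<bar>\<close>]
        eventually_at_left_real[OF \<open>0 < \<bar>a\<bar>\<close>] in \<open>auto simp: g3_range_gt\<close>)
  qed
qed

lemma hsol_greatest_exists:
  "\<exists>G1 G3. hsol_greatest a G1 G3 (blowup_time a) \<and> blowup_limits a (blowup_time a) G1 G3"
proof (cases "a\<^sup>2 = 1")
  case True
  then have "blowup_time a = - 1 / 4" by (auto simp: blowup_time_def abs_square_eq_1)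
  with hsol_greatest_unit[OF True] blowup_limits_unit[OF True] show ?thesis by auto
next
  case False
  interpret time_potential a "blowup_time a" "reduced_time a"
    by (rule time_potential_reduced_time[OF False])
  from G_greatest G_blowup_limits show ?thesis by blast
qed

lemma blowup_time_neg: "blowup_time a < 0"
proof (cases "a\<^sup>2 = 1")
  case True
  then show ?thesis by (auto simp: blowup_time_def abs_square_eq_1)
next
  case False
  then show ?thesis by (rule time_potential.T_neg[OF time_potential_reduced_time])
qed

lemma hmaxsol_blowup:
  "(\<exists>g1 g3. hmaxsol a g1 g3 {blowup_time a<..}) \<and>
   (\<forall>g1 g3 I. hmaxsol a g1 g3 I \<longrightarrow> I = {blowup_time a<..} \<and> blowup_limits a (blowup_time a) g1 g3)"
proof -
  obtain G1 G3 where greatest: "hsol_greatest a G1 G3 (blowup_time a)"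
    and limits: "blowup_limits a (blowup_time a) G1 G3"
    using hsol_greatest_exists by blast
  have "I = {blowup_time a<..} \<and> blowup_limits a (blowup_time a) g1 g3" if "hmaxsol a g1 g3 I" for g1 g3 I
    using hmaxsol_eq_greatest[OF greatest that] blowup_limits_cong[OF limits] by simp
  with hsol_greatest_hmaxsol[OF greatest] show ?thesis by blast
qed

theorem mainTheorem9:
  shows "\<exists>Tmin :: real \<Rightarrow> real.
    (\<forall>a. Tmin a < 0) \<and> (\<forall>a. Tmin (- a) = Tmin a) \<and> Tmin 0 = - 1/3 \<and>
    (\<forall>a. (\<exists>g1 g3. hmaxsol a g1 g3 {Tmin a<..}) \<and>
      (\<forall>g1 g3 I. hmaxsol a g1 g3 I \<longrightarrow>
          I = {Tmin a<..} \<and>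
          (g1 \<longlongrightarrow> 0) (at_right (Tmin a)) \<and>
          (\<bar>a\<bar> < 1 \<longrightarrow> filterlim g3 at_top (at_right (Tmin a))) \<and>
          (\<bar>a\<bar> = 1 \<longrightarrow> (g3 \<longlongrightarrow> 1) (at_right (Tmin a))) \<and>
          (\<bar>a\<bar> > 1 \<longrightarrow> (g3 \<longlongrightarrow> 0) (at_right (Tmin a)))))"
proof (intro exI[of _ blowup_time] conjI)
  show "\<forall>a. blowup_time a < 0" using blowup_time_neg by blast
  show "\<forall>a. blowup_time (- a) = blowup_time a" by (simp add: blowup_time_def)
  show "blowup_time 0 = - 1 / 3" by (simp add: blowup_time_def)
qed (use hmaxsol_blowup[unfolded blowup_limits_def] in blast)

end
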